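(* Let $A$ be a non-zero Abelian group which is either a torsion group or a non-reduced group. If the endomorphism ring $\mathrm{End}\,A$ is centrally essential, then $\mathrm{End}\,A$ is commutative.
   Context: All rings are associative with non-zero identity. A ring $R$ is centrally essential if for every non-zero $a\in R$ there exist non-zero elements $x,y$ of the center of $R$ with $ax=y$. An Abelian group is reduced if it has no non-zero divisible subgroup, and non-reduced otherwise. *)

theory Defs
  imports "HOL-Algebra.Ring"
begin

definition nsmul :: "nat \<Rightarrow> 'a::ab_group_add \<Rightarrow> 'a" where
  "nsmul n x = (((+) x) ^^ n) 0"

definition torsion_group :: "'a::ab_group_add itself \<Rightarrow> bool" where
  "torsion_group _ \<longleftrightarrow> (\<forall>x::'a. \<exists>n>0. nsmul n x = 0)"

definition subgroup_add :: "'a::ab_group_add set \<Rightarrow> bool" where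
  "subgroup_add D \<longleftrightarrow> 0 \<in> D \<and> (\<forall>x\<in>D. \<forall>y\<in>D. x + y \<in> D) \<and> (\<forall>x\<in>D. - x \<in> D)"

definition divisible_subgroup :: "'a::ab_group_add set \<Rightarrow> bool" where
  "divisible_subgroup D \<longleftrightarrow> subgroup_add D \<and> (\<forall>d\<in>D. \<forall>n>0. \<exists>e\<in>D. nsmul n e = d)"

definition reduced_group :: "'a::ab_group_add itself \<Rightarrow> bool" where
  "reduced_group _ \<longleftrightarrow> (\<forall>D::'a set. divisible_subgroup D \<longrightarrow> D = {0})"

definition endos :: "('a::ab_group_add \<Rightarrow> 'a) set" where
  "endos = {f. \<forall>x y. f (x + y) = f x + f y}"

definition End_ring :: "'a::ab_group_add itself \<Rightarrow> ('a \<Rightarrow> 'a) ring" where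
  "End_ring _ = \<lparr>carrier = endos, monoid.mult = (\<circ>), one = id,
                 zero = (\<lambda>_. 0), add = (\<lambda>f g x. f x + g x)\<rparr>"

definition ring_center :: "('r, 'm) ring_scheme \<Rightarrow> 'r set" where
  "ring_center R = {z \<in> carrier R. \<forall>a\<in>carrier R. z \<otimes>\<^bsub>R\<^esub> a = a \<otimes>\<^bsub>R\<^esub> z}"

definition centrally_essential :: "('r, 'm) ring_scheme \<Rightarrow> bool" where
  "centrally_essential R \<longleftrightarrow>
     (\<forall>a\<in>carrier R. a \<noteq> \<zero>\<^bsub>R\<^esub> \<longrightarrow>
        (\<exists>x\<in>ring_center R. \<exists>y\<in>ring_center R.
           x \<noteq> \<zero>\<^bsub>R\<^esub> \<and> y \<noteq> \<zero>\<^bsub>R\<^esub> \<and> a \<otimes>\<^bsub>R\<^esub> x = y))"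

definition ring_commutative :: "('r, 'm) ring_scheme \<Rightarrow> bool" where
  "ring_commutative R \<longleftrightarrow> (\<forall>a\<in>carrier R. \<forall>b\<in>carrier R. a \<otimes>\<^bsub>R\<^esub> b = b \<otimes>\<^bsub>R\<^esub> a)"

end

(*
  In a centrally essential ring every idempotent is central. For End A this means that a
  retraction r of A onto a subgroup commutes with every endomorphism h; in particular r y = 0
  implies r (h y) = h (r y) = 0. This is combined with extension results for cyclic direct
  summands and for divisible, hence injective, subgroups.

  For each prime p the elements of order p form a cyclic group: either one of them has finite
  p-height and lies in a pure cyclic subgroup of bounded order, which is a direct summand, or all
  of them are infinitely p-divisible and lie in a quasicyclic, hence divisible, subgroup. By
  induction on the order, every endomorphism maps a torsion element v to a multiple of v, so
  endomorphisms commute on torsion elements.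

  If A has a non-zero divisible subgroup D and v has infinite order, then D is torsion-free of
  rank one, so endomorphisms act on D by rational scalars, and v - r v is torsion for a
  retraction r onto D. Hence endomorphisms commute on v as well.
*)

theory Submission
  imports Defs "HOL-Computational_Algebra.Primes"
begin

section \<open>Integer multiples\<close>

lemma nsmul_0 [simp]: "nsmul 0 x = 0"
  by (simp add: nsmul_def)

lemma nsmul_Suc: "nsmul (Suc n) x = x + nsmul n x"
  by (simp add: nsmul_def)

lemma nsmul_add_left: "nsmul (m + n) x = nsmul m x + nsmul n x"
  by (induction m) (simp_all add: nsmul_Suc add.assoc)

lemma nsmul_add_right: "nsmul n (x + y) = nsmul n x + nsmul n y"
  by (induction n) (simp_all add: nsmul_Suc algebra_simps)

lemma nsmul_minus_right: "nsmul n (- x) = - nsmul n x"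
  by (induction n) (simp_all add: nsmul_Suc algebra_simps)

lemma nsmul_diff_right: "nsmul n (x - y) = nsmul n x - nsmul n y"
  using nsmul_add_right[of n x "- y"] by (simp add: nsmul_minus_right)

lemma nsmul_mult: "nsmul (m * n) x = nsmul m (nsmul n x)"
  by (induction m) (simp_all add: nsmul_Suc nsmul_add_left)

lemma nsmul_zero_right [simp]: "nsmul n (0::'a::ab_group_add) = 0"
  by (induction n) (simp_all add: nsmul_Suc)

definition zsmul :: "int \<Rightarrow> 'a::ab_group_add \<Rightarrow> 'a" where
  "zsmul k x = (if 0 \<le> k then nsmul (nat k) x else - nsmul (nat (- k)) x)"

lemma zsmul_of_nat_diff: "zsmul (int a - int b) x = nsmul a x - nsmul b x"
proof (cases "b \<le> a")
  case True
  then have sum: "nsmul a x = nsmul (a - b) x + nsmul b x"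
    by (metis le_add_diff_inverse2 nsmul_add_left)
  have diff: "int a - int b = int (a - b)"
    using True by simp
  show ?thesis
    unfolding diff zsmul_def using sum by simp
next
  case False
  then have sum: "nsmul b x = nsmul (b - a) x + nsmul a x"
    by (metis le_add_diff_inverse2 nat_le_linear nsmul_add_left)
  have diff: "int a - int b = - int (b - a)"
    using False by simp
  show ?thesis
    unfolding diff zsmul_def using sum False by (simp add: nat_diff_distrib)
qed

lemma zsmul_of_nat: "zsmul (int n) x = nsmul n x"
  using zsmul_of_nat_diff[of n 0 x] by simp

lemma zsmul_0_left [simp]: "zsmul 0 x = 0"
  by (simp add: zsmul_def)

lemma zsmul_1 [simp]: "zsmul 1 x = x"
  by (simp add: zsmul_def nsmul_def)

lemma zsmul_0_right [simp]: "zsmul k (0::'a::ab_group_add) = 0"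
  by (simp add: zsmul_def)

lemma zsmul_add_left: "zsmul (k + l) x = zsmul k x + zsmul l x"
proof -
  obtain a b c d where "k = int a - int b" "l = int c - int d"
    by (metis int_diff_cases)
  moreover from this have "k + l = int (a + c) - int (b + d)"
    by simp
  ultimately show ?thesis
    by (simp only: zsmul_of_nat_diff nsmul_add_left) simp
qed

lemma zsmul_minus_left: "zsmul (- k) x = - zsmul k x"
  using zsmul_add_left[of k "- k" x] by (simp add: eq_neg_iff_add_eq_0 add.commute)

lemma zsmul_diff_left: "zsmul (k - l) x = zsmul k x - zsmul l x"
  using zsmul_add_left[of k "- l" x] by (simp add: zsmul_minus_left)

lemma zsmul_add_right: "zsmul k (x + y) = zsmul k x + zsmul k y"
proof -
  obtain a b where "k = int a - int b"
    by (metis int_diff_cases)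
  then show ?thesis
    by (simp add: zsmul_of_nat_diff nsmul_add_right)
qed

lemma zsmul_minus_right: "zsmul k (- x) = - zsmul k x"
  using zsmul_add_right[of k x "- x"] by (simp add: add.inverse_unique)

lemma zsmul_diff_right: "zsmul k (x - y) = zsmul k x - zsmul k y"
  using zsmul_add_right[of k x "- y"] by (simp add: zsmul_minus_right)

lemma zsmul_mult: "zsmul (k * l) x = zsmul k (zsmul l x)"
proof -
  obtain a b c d where k: "k = int a - int b" and l: "l = int c - int d"
    by (metis int_diff_cases)
  have "k * l = int (a * c + b * d) - int (a * d + b * c)"
    unfolding k l by (simp add: algebra_simps)
  then have "zsmul (k * l) x = nsmul (a * c + b * d) x - nsmul (a * d + b * c) x"
    by (simp only: zsmul_of_nat_diff)
  also have "\<dots> = nsmul a (nsmul c x - nsmul d x) - nsmul b (nsmul c x - nsmul d x)"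
    by (simp only: nsmul_add_left nsmul_mult nsmul_diff_right) (simp add: algebra_simps)
  also have "\<dots> = zsmul k (zsmul l x)"
    unfolding k l by (simp only: zsmul_of_nat_diff)
  finally show ?thesis .
qed

lemma zsmul_commute: "zsmul k (zsmul l x) = zsmul l (zsmul k x)"
  by (metis zsmul_mult mult.commute)

lemma zsmul_eq_0_dvd: "zsmul m x = 0 \<Longrightarrow> m dvd k \<Longrightarrow> zsmul k x = 0"
  by (metis dvdE zsmul_0_right zsmul_commute zsmul_mult)

section \<open>The endomorphism ring\<close>

lemma endosI: "(\<And>x y. f (x + y) = f x + f y) \<Longrightarrow> f \<in> endos"
  by (simp add: endos_def)

lemma endos_add: "f \<in> endos \<Longrightarrow> f (x + y) = f x + f y"
  by (simp add: endos_def)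

lemma endos_zero [simp]: "f \<in> endos \<Longrightarrow> f 0 = 0"
  using endos_add[of f 0 0] by simp

lemma endos_minus: "f \<in> endos \<Longrightarrow> f (- x) = - f x"
  using endos_add[of f x "- x"] by (simp add: add.inverse_unique)

lemma endos_diff: "f \<in> endos \<Longrightarrow> f (x - y) = f x - f y"
  using endos_add[of f x "- y"] by (simp add: endos_minus)

lemma endos_nsmul: "f \<in> endos \<Longrightarrow> f (nsmul n x) = nsmul n (f x)"
  by (induction n) (simp_all add: nsmul_Suc endos_add)

lemma endos_zsmul: "f \<in> endos \<Longrightarrow> f (zsmul k x) = zsmul k (f x)"
  by (simp add: zsmul_def endos_nsmul endos_minus)

lemma End_ring_simps [simp]:
  "carrier (End_ring A) = endos"
  "monoid.mult (End_ring A) = (\<circ>)"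
  "one (End_ring A) = id"
  "zero (End_ring A) = (\<lambda>_. 0)"
  "add (End_ring A) = (\<lambda>f g x. f x + g x)"
  by (simp_all add: End_ring_def)

lemma ring_End_ring: "ring (End_ring A)"
proof (rule ringI)
  show "abelian_group (End_ring A)"
  proof (rule abelian_groupI)
    fix f assume "f \<in> carrier (End_ring A)"
    then show "\<exists>g\<in>carrier (End_ring A). g \<oplus>\<^bsub>End_ring A\<^esub> f = \<zero>\<^bsub>End_ring A\<^esub>"
      by (intro bexI[of _ "\<lambda>x. - f x"]) (auto simp: endos_def)
  qed (auto simp: endos_def algebra_simps)
  show "monoid (End_ring A)"
    by (rule monoidI) (auto simp: endos_def)
qed (auto simp: endos_def fun_eq_iff)

lemma End_ring_center_iff:
  "z \<in> ring_center (End_ring A) \<longleftrightarrow> z \<in> endos \<and> (\<forall>h\<in>endos. \<forall>x. z (h x) = h (z x))"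
  by (auto simp: ring_center_def fun_eq_iff)

section \<open>Centrally essential rings\<close>

context ring
begin

lemma centrally_essential_absorb_eq_zero:
  assumes "centrally_essential R" and carr: "e \<in> carrier R" "a \<in> carrier R"
    and "e \<otimes> a = a" and "a \<otimes> e = \<zero>"
  shows "a = \<zero>"
proof (rule ccontr)
  assume "a \<noteq> \<zero>"
  with assms obtain x y where x: "x \<in> ring_center R" and y: "y \<in> ring_center R"
    and "y \<noteq> \<zero>" and ax: "a \<otimes> x = y"
    unfolding centrally_essential_def by blast
  have xy: "x \<in> carrier R" "y \<in> carrier R"
    using x y by (auto simp: ring_center_def)
  have "y = e \<otimes> y"
    using carr xy \<open>e \<otimes> a = a\<close> by (simp flip: ax m_assoc)
  also have "\<dots> = a \<otimes> e \<otimes> x"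
    using carr xy x y by (simp add: ring_center_def m_assoc flip: ax)
  also have "\<dots> = \<zero>"
    using xy \<open>a \<otimes> e = \<zero>\<close> by simp
  finally show False
    using \<open>y \<noteq> \<zero>\<close> by contradiction
qed

lemma idempotent_corner_zero:
  assumes "centrally_essential R" and carr: "e \<in> carrier R" "h \<in> carrier R"
    and idem: "e \<otimes> e = e"
  shows "e \<otimes> h \<otimes> (\<one> \<ominus> e) = \<zero>"
proof (rule centrally_essential_absorb_eq_zero)
  have "(\<one> \<ominus> e) \<otimes> e = e \<ominus> e \<otimes> e"
    using carr by algebra
  then have "(\<one> \<ominus> e) \<otimes> e = \<zero>"
    using carr idem by (simp add: r_neg minus_eq)
  then show "e \<otimes> h \<otimes> (\<one> \<ominus> e) \<otimes> e = \<zero>"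
    using carr by (simp add: m_assoc)
  show "e \<otimes> (e \<otimes> h \<otimes> (\<one> \<ominus> e)) = e \<otimes> h \<otimes> (\<one> \<ominus> e)"
    using carr idem by (simp flip: m_assoc)
qed (use assms in auto)

theorem centrally_essential_idempotent_central:
  assumes ce: "centrally_essential R" and e: "e \<in> carrier R" and idem: "e \<otimes> e = e"
  shows "e \<in> ring_center R"
proof -
  have e': "\<one> \<ominus> e \<in> carrier R"
    using e by simp
  have "(\<one> \<ominus> e) \<otimes> (\<one> \<ominus> e) = \<one> \<ominus> e \<ominus> e \<oplus> e \<otimes> e"
    using e by (simp add: r_distr l_distr minus_eq r_minus l_minus a_assoc minus_add)
  also have "\<dots> = \<one> \<ominus> e"
    unfolding idem using e by algebra
  finally have idem': "(\<one> \<ominus> e) \<otimes> (\<one> \<ominus> e) = \<one> \<ominus> e" .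
  have "h \<otimes> e = e \<otimes> h" if h: "h \<in> carrier R" for h
  proof -
    have "\<one> \<ominus> (\<one> \<ominus> e) = e"
      using e by algebra
    then have right: "(\<one> \<ominus> e) \<otimes> h \<otimes> e = \<zero>"
      using idempotent_corner_zero[OF ce e' h idem'] by simp
    have left: "e \<otimes> h \<otimes> (\<one> \<ominus> e) = \<zero>"
      by (rule idempotent_corner_zero[OF ce e h idem])
    have "h \<otimes> e = (\<one> \<ominus> e) \<otimes> h \<otimes> e \<oplus> e \<otimes> h \<otimes> e"
      using e h by (simp add: l_distr minus_eq l_minus a_assoc l_neg)
    also have "\<dots> = e \<otimes> h \<otimes> (\<one> \<ominus> e) \<oplus> e \<otimes> h \<otimes> e"
      using e h by (simp add: left right)
    also have "\<dots> = e \<otimes> h"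
      using e h by (simp add: r_distr minus_eq r_minus m_assoc a_assoc l_neg)
    finally show ?thesis .
  qed
  then show ?thesis
    using e by (simp add: ring_center_def)
qed

end

section \<open>Subgroups and cyclic subgroups\<close>

lemma subgroup_add_zero: "subgroup_add H \<Longrightarrow> 0 \<in> H"
  by (simp add: subgroup_add_def)

lemma subgroup_add_add: "subgroup_add H \<Longrightarrow> x \<in> H \<Longrightarrow> y \<in> H \<Longrightarrow> x + y \<in> H"
  by (simp add: subgroup_add_def)

lemma subgroup_add_minus: "subgroup_add H \<Longrightarrow> x \<in> H \<Longrightarrow> - x \<in> H"
  by (simp add: subgroup_add_def)

lemma subgroup_add_diff: "subgroup_add H \<Longrightarrow> x \<in> H \<Longrightarrow> y \<in> H \<Longrightarrow> x - y \<in> H"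
  by (metis diff_conv_add_uminus subgroup_add_add subgroup_add_minus)

lemma subgroup_add_nsmul: "subgroup_add H \<Longrightarrow> x \<in> H \<Longrightarrow> nsmul n x \<in> H"
  by (induction n) (simp_all add: nsmul_Suc subgroup_add_zero subgroup_add_add)

lemma subgroup_add_zsmul: "subgroup_add H \<Longrightarrow> x \<in> H \<Longrightarrow> zsmul k x \<in> H"
  by (simp add: zsmul_def subgroup_add_nsmul subgroup_add_minus)

definition multiples :: "'a::ab_group_add \<Rightarrow> 'a set" where
  "multiples x = range (\<lambda>k. zsmul k x)"

definition annihilator :: "'a::ab_group_add \<Rightarrow> int set" where
  "annihilator x = {k. zsmul k x = 0}"

lemma multiplesI [intro]: "zsmul k x \<in> multiples x"
  by (simp add: multiples_def)

lemma multiples_self [simp]: "x \<in> multiples x"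
  using multiplesI[of 1 x] by simp

lemma multiplesE [elim]: "y \<in> multiples x \<Longrightarrow> (\<And>k. y = zsmul k x \<Longrightarrow> P) \<Longrightarrow> P"
  by (auto simp: multiples_def)

lemma multiples_trans: "y \<in> multiples x \<Longrightarrow> z \<in> multiples y \<Longrightarrow> z \<in> multiples x"
  by (metis multiplesE multiplesI zsmul_mult)

lemma subgroup_multiples: "subgroup_add (multiples x)"
  unfolding subgroup_add_def multiples_def
  by (auto simp flip: zsmul_add_left zsmul_minus_left intro: range_eqI[of _ _ 0])

lemma annihilator_iff [simp]: "k \<in> annihilator x \<longleftrightarrow> zsmul k x = 0"
  by (simp add: annihilator_def)

lemma zero_in_annihilator: "0 \<in> annihilator x"
  by simp

lemma annihilator_multiple:
  assumes "y \<in> multiples x"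
  shows "annihilator x \<subseteq> annihilator y"
proof
  fix k assume "k \<in> annihilator x"
  moreover obtain l where "y = zsmul l x"
    using assms by blast
  ultimately show "k \<in> annihilator y"
    by (simp add: zsmul_commute[of k l])
qed

lemma annihilator_diff: "annihilator x \<inter> annihilator y \<subseteq> annihilator (x - y)"
  by (auto simp: zsmul_diff_right)

lemma annihilator_endo: "f \<in> endos \<Longrightarrow> annihilator x \<subseteq> annihilator (f x)"
  by (auto simp flip: endos_zsmul)

lemma subgroup_order_ideal:
  assumes H: "subgroup_add H"
  shows "\<exists>d\<ge>0. \<forall>k. zsmul k y \<in> H \<longleftrightarrow> d dvd k"
proof (cases "\<exists>n>0. zsmul (int n) y \<in> H")
  case False
  have "zsmul k y \<notin> H" if "k \<noteq> 0" for k
  proof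
    assume "zsmul k y \<in> H"
    then have "zsmul \<bar>k\<bar> y \<in> H"
      using H by (cases "k \<ge> 0") (simp_all add: zsmul_minus_left subgroup_add_minus)
    with False that show False
      by (auto dest!: spec[of _ "nat \<bar>k\<bar>"])
  qed
  then show ?thesis
    using subgroup_add_zero[OF H] by (intro exI[of _ 0]) auto
next
  case True
  define d where "d = (LEAST n. n > 0 \<and> zsmul (int n) y \<in> H)"
  have d: "d > 0" "zsmul (int d) y \<in> H"
    using LeastI_ex[OF True] unfolding d_def by auto
  have d_least: "d \<le> n" if "n > 0" "zsmul (int n) y \<in> H" for n
    unfolding d_def using that by (auto intro: Least_le)
  have "zsmul k y \<in> H \<longleftrightarrow> int d dvd k" for k
  proof
    assume k: "zsmul k y \<in> H"
    have "zsmul (k mod int d) y = zsmul k y - zsmul (k div int d) (zsmul (int d) y)"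
      by (simp add: minus_div_mult_eq_mod[symmetric] zsmul_diff_left zsmul_mult zsmul_commute)
    then have "zsmul (int (nat (k mod int d))) y \<in> H"
      using d k H by (simp add: subgroup_add_diff subgroup_add_zsmul)
    moreover have "k mod int d < int d"
      using d(1) by simp
    ultimately have "\<not> nat (k mod int d) > 0"
      using d_least[of "nat (k mod int d)"] by fastforce
    moreover have "k mod int d \<ge> 0"
      using d(1) by simp
    ultimately show "int d dvd k"
      by (simp add: dvd_eq_mod_eq_0)
  next
    assume "int d dvd k"
    then show "zsmul k y \<in> H"
      using d(2) H by (auto simp: zsmul_mult mult.commute subgroup_add_zsmul elim!: dvdE)
  qed
  then show ?thesis
    by (intro exI[of _ "int d"]) auto
qed

section \<open>Extending partial homomorphisms\<close>

definition partial_hom :: "('a::ab_group_add \<times> 'a) set \<Rightarrow> bool" where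
  "partial_hom G \<longleftrightarrow> (0, 0) \<in> G \<and> (\<forall>(a, b)\<in>G. \<forall>(c, d)\<in>G. (a + c, b + d) \<in> G)
     \<and> (\<forall>(a, b)\<in>G. (- a, - b) \<in> G) \<and> single_valued G"

lemma partial_homI:
  assumes "(0, 0) \<in> G"
    and "\<And>a b c d. (a, b) \<in> G \<Longrightarrow> (c, d) \<in> G \<Longrightarrow> (a + c, b + d) \<in> G"
    and "\<And>a b. (a, b) \<in> G \<Longrightarrow> (- a, - b) \<in> G"
    and "\<And>a b c. (a, b) \<in> G \<Longrightarrow> (a, c) \<in> G \<Longrightarrow> b = c"
  shows "partial_hom G"
  using assms unfolding partial_hom_def single_valued_def by blast

lemma partial_hom_zero: "partial_hom G \<Longrightarrow> (0, 0) \<in> G"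
  by (simp add: partial_hom_def)

lemma partial_hom_add: "partial_hom G \<Longrightarrow> (a, b) \<in> G \<Longrightarrow> (c, d) \<in> G \<Longrightarrow> (a + c, b + d) \<in> G"
  unfolding partial_hom_def by blast

lemma partial_hom_minus: "partial_hom G \<Longrightarrow> (a, b) \<in> G \<Longrightarrow> (- a, - b) \<in> G"
  unfolding partial_hom_def by blast

lemma partial_hom_unique: "partial_hom G \<Longrightarrow> (a, b) \<in> G \<Longrightarrow> (a, c) \<in> G \<Longrightarrow> b = c"
  unfolding partial_hom_def single_valued_def by blast

lemma partial_hom_diff: "partial_hom G \<Longrightarrow> (a, b) \<in> G \<Longrightarrow> (c, d) \<in> G \<Longrightarrow> (a - c, b - d) \<in> G"
  using partial_hom_add[of G a b "- c" "- d"] partial_hom_minus[of G c d] by simp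

lemma partial_hom_zsmul: "partial_hom G \<Longrightarrow> (a, b) \<in> G \<Longrightarrow> (zsmul k a, zsmul k b) \<in> G"
proof -
  assume G: "partial_hom G" and ab: "(a, b) \<in> G"
  have "(nsmul n a, nsmul n b) \<in> G" for n
    by (induction n) (simp_all add: nsmul_Suc partial_hom_zero[OF G] partial_hom_add[OF G ab])
  then show ?thesis
    by (simp add: zsmul_def partial_hom_minus[OF G])
qed

lemma subgroup_Domain_partial_hom: "partial_hom G \<Longrightarrow> subgroup_add (Domain G)"
  unfolding subgroup_add_def by (blast intro: partial_hom_zero partial_hom_add partial_hom_minus)

lemma partial_hom_chain_Union:
  assumes "C \<noteq> {}" and "chain\<^sub>\<subseteq> C" and "\<And>G. G \<in> C \<Longrightarrow> partial_hom G"
  shows "partial_hom (\<Union>C)"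
proof -
  have common: "\<exists>G\<in>C. p \<in> G \<and> q \<in> G" if "p \<in> \<Union>C" "q \<in> \<Union>C" for p q
    using that \<open>chain\<^sub>\<subseteq> C\<close> unfolding chain_subset_def by blast
  show ?thesis
  proof (rule partial_homI)
    show "(0, 0) \<in> \<Union>C"
      using assms(1,3) partial_hom_zero by blast
  next
    fix a b c d assume "(a, b) \<in> \<Union>C" "(c, d) \<in> \<Union>C"
    then show "(a + c, b + d) \<in> \<Union>C"
      using common assms(3) partial_hom_add by (metis UnionI)
  next
    fix a b assume "(a, b) \<in> \<Union>C"
    then show "(- a, - b) \<in> \<Union>C"
      using assms(3) partial_hom_minus by blast
  next
    fix a b c assume "(a, b) \<in> \<Union>C" "(a, c) \<in> \<Union>C"
    then show "b = c"
      using common assms(3) partial_hom_unique by metis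
  qed
qed

lemma partial_hom_adjoin:
  assumes G: "partial_hom G" and dom: "\<And>k. zsmul k y \<in> Domain G \<longleftrightarrow> d dvd k"
    and t: "(zsmul d y, zsmul d t) \<in> G"
  shows "partial_hom {(a + zsmul k y, b + zsmul k t) | a b k. (a, b) \<in> G}"
    (is "partial_hom ?G'")
proof -
  have mem: "(a + zsmul k y, b + zsmul k t) \<in> ?G'" if "(a, b) \<in> G" for a b k
    using that by blast
  show ?thesis
  proof (rule partial_homI)
    show "(0, 0) \<in> ?G'"
      using mem[OF partial_hom_zero[OF G], of 0] by simp
  next
    fix a b c e assume "(a, b) \<in> ?G'" "(c, e) \<in> ?G'"
    then obtain a1 b1 k1 a2 b2 k2 where "(a1, b1) \<in> G" "(a2, b2) \<in> G"
      and "a = a1 + zsmul k1 y" "b = b1 + zsmul k1 t" "c = a2 + zsmul k2 y" "e = b2 + zsmul k2 t"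
      by blast
    then show "(a + c, b + e) \<in> ?G'"
      using mem[OF partial_hom_add[OF G], of a1 b1 a2 b2 "k1 + k2"]
      by (simp add: zsmul_add_left algebra_simps)
  next
    fix a b assume "(a, b) \<in> ?G'"
    then obtain a1 b1 k where "(a1, b1) \<in> G" "a = a1 + zsmul k y" "b = b1 + zsmul k t"
      by blast
    then show "(- a, - b) \<in> ?G'"
      using mem[OF partial_hom_minus[OF G], of a1 b1 "- k"] by (simp add: zsmul_minus_left)
  next
    fix a b c assume "(a, b) \<in> ?G'" "(a, c) \<in> ?G'"
    then obtain a1 b1 k1 a2 b2 k2 where G12: "(a1, b1) \<in> G" "(a2, b2) \<in> G"
      and a: "a = a1 + zsmul k1 y" "a = a2 + zsmul k2 y"
      and bc: "b = b1 + zsmul k1 t" "c = b2 + zsmul k2 t"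
      by blast
    have "a1 = a - zsmul k1 y" "a2 = a - zsmul k2 y"
      using a by (simp_all add: eq_diff_eq)
    then have diff: "(zsmul (k2 - k1) y, b1 - b2) \<in> G"
      using partial_hom_diff[OF G G12] by (simp add: zsmul_diff_left)
    then obtain q where q: "k2 - k1 = d * q"
      using dom by blast
    have "(zsmul (k2 - k1) y, zsmul (k2 - k1) t) \<in> G"
      using partial_hom_zsmul[OF G t, of q] q by (simp add: zsmul_mult zsmul_commute[of q])
    then have "b1 - b2 = zsmul (k2 - k1) t"
      using diff partial_hom_unique[OF G] by blast
    then show "b = c"
      using bc by (simp add: zsmul_diff_left algebra_simps)
  qed
qed

lemma partial_hom_total:
  assumes G: "partial_hom G" and total: "Domain G = UNIV"
  shows "\<exists>h\<in>endos. \<forall>a b. (a, b) \<in> G \<longleftrightarrow> h a = b"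
proof -
  define h where "h a = (THE b. (a, b) \<in> G)" for a
  have h_iff: "(a, b) \<in> G \<longleftrightarrow> h a = b" for a b
  proof -
    obtain c where "(a, c) \<in> G"
      using total by blast
    then have "h a = c"
      unfolding h_def using partial_hom_unique[OF G] by blast
    then show ?thesis
      using \<open>(a, c) \<in> G\<close> partial_hom_unique[OF G] by blast
  qed
  have "h \<in> endos"
    by (rule endosI) (use partial_hom_add[OF G] h_iff in blast)
  with h_iff show ?thesis
    by blast
qed

lemma partial_hom_extend_one:
  assumes G: "partial_hom G" "Range G \<subseteq> T" and T: "subgroup_add T"
    and dom: "\<forall>k. zsmul k y \<in> Domain G \<longleftrightarrow> d dvd k"
    and t: "t \<in> T" "(zsmul d y, zsmul d t) \<in> G"
  obtains G' where "partial_hom G'" "G \<subseteq> G'" "Range G' \<subseteq> T" "y \<in> Domain G'"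
proof
  let ?G' = "{(a + zsmul k y, b + zsmul k t) | a b k. (a, b) \<in> G}"
  have mem: "(a + zsmul k y, b + zsmul k t) \<in> ?G'" if "(a, b) \<in> G" for a b k
    using that by blast
  show "partial_hom ?G'"
    using partial_hom_adjoin[OF G(1) dom[rule_format] t(2)] .
  show "G \<subseteq> ?G'"
    using mem[of _ _ 0] by auto
  show "Range ?G' \<subseteq> T"
  proof
    fix c assume "c \<in> Range ?G'"
    then obtain a b k where "(a, b) \<in> G" "c = b + zsmul k t"
      by blast
    then show "c \<in> T"
      using G(2) t(1) T by (blast intro: subgroup_add_add subgroup_add_zsmul)
  qed
  show "y \<in> Domain ?G'"
    using mem[OF partial_hom_zero[OF G(1)], of 1] by auto
qed

lemma partial_hom_chain_bound:
  assumes G0: "partial_hom G0" "Range G0 \<subseteq> T"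
    and C: "C \<in> chains {G. partial_hom G \<and> G0 \<subseteq> G \<and> Range G \<subseteq> T}"
  shows "\<exists>U\<in>{G. partial_hom G \<and> G0 \<subseteq> G \<and> Range G \<subseteq> T}. \<forall>G\<in>C. G \<subseteq> U"
proof (cases "C = {}")
  case True
  then show ?thesis
    using G0 by auto
next
  case False
  have C_sub: "C \<subseteq> {G. partial_hom G \<and> G0 \<subseteq> G \<and> Range G \<subseteq> T}" and "chain\<^sub>\<subseteq> C"
    using C by (simp_all add: chains_def)
  then have "partial_hom (\<Union>C)"
    using False by (intro partial_hom_chain_Union) auto
  moreover have "G0 \<subseteq> \<Union>C" "Range (\<Union>C) \<subseteq> T"
    using False C_sub by auto
  ultimately show ?thesis
    by blast
qed

lemma partial_hom_extends:
  assumes G0: "partial_hom G0" "Range G0 \<subseteq> T" and T: "subgroup_add T"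
    and step: "\<And>G y d. partial_hom G \<Longrightarrow> G0 \<subseteq> G \<Longrightarrow> Range G \<subseteq> T \<Longrightarrow> d \<ge> 0 \<Longrightarrow>
      (\<forall>k. zsmul k y \<in> Domain G \<longleftrightarrow> d dvd k) \<Longrightarrow> \<exists>t\<in>T. (zsmul d y, zsmul d t) \<in> G"
  shows "\<exists>h\<in>endos. range h \<subseteq> T \<and> (\<forall>(a, b)\<in>G0. h a = b)"
proof -
  define \<G> where "\<G> = {G. partial_hom G \<and> G0 \<subseteq> G \<and> Range G \<subseteq> T}"
  have "\<forall>C\<in>chains \<G>. \<exists>U\<in>\<G>. \<forall>G\<in>C. G \<subseteq> U"
    unfolding \<G>_def by (intro ballI partial_hom_chain_bound[OF G0])
  from Zorn_Lemma2[OF this] obtain M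
    where M: "M \<in> \<G>" and M_max: "\<And>G. G \<in> \<G> \<Longrightarrow> M \<subseteq> G \<Longrightarrow> G = M"
    by blast
  have M_hom: "partial_hom M" and "G0 \<subseteq> M" and M_T: "Range M \<subseteq> T"
    using M by (auto simp: \<G>_def)
  have "y \<in> Domain M" for y
  proof -
    obtain d where "d \<ge> 0" and dom: "\<forall>k. zsmul k y \<in> Domain M \<longleftrightarrow> d dvd k"
      using subgroup_order_ideal[OF subgroup_Domain_partial_hom[OF M_hom]] by blast
    with step obtain t where "t \<in> T" "(zsmul d y, zsmul d t) \<in> M"
      using M_hom \<open>G0 \<subseteq> M\<close> M_T by blast
    then obtain M' where "partial_hom M'" "M \<subseteq> M'" "Range M' \<subseteq> T" "y \<in> Domain M'"
      using partial_hom_extend_one[OF M_hom M_T T dom] by blast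
    moreover from this have "M' = M"
      using M_max \<open>G0 \<subseteq> M\<close> unfolding \<G>_def by blast
    ultimately show ?thesis
      by simp
  qed
  then obtain h where "h \<in> endos" and h: "\<And>a b. (a, b) \<in> M \<longleftrightarrow> h a = b"
    using partial_hom_total[OF M_hom] by blast
  have "(a, h a) \<in> M" for a
    using h by blast
  then have "range h \<subseteq> T"
    using M_T by blast
  moreover have "\<forall>(a, b)\<in>G0. h a = b"
    using h \<open>G0 \<subseteq> M\<close> by auto
  ultimately show ?thesis
    using \<open>h \<in> endos\<close> by blast
qed

section \<open>Divisible subgroups and retractions\<close>

definition retraction :: "('a::ab_group_add \<Rightarrow> 'a) \<Rightarrow> 'a set \<Rightarrow> bool" where
  "retraction r S \<longleftrightarrow> r \<in> endos \<and> range r \<subseteq> S \<and> (\<forall>s\<in>S. r s = s)"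

lemma retraction_idem: "retraction r S \<Longrightarrow> r (r x) = r x"
  unfolding retraction_def by blast

lemma divisible_subgroup_subgroup: "divisible_subgroup D \<Longrightarrow> subgroup_add D"
  by (simp add: divisible_subgroup_def)

lemma divisible_subgroup_zsmulE:
  assumes D: "divisible_subgroup D" and "u \<in> D" "d > 0"
  obtains e where "e \<in> D" "zsmul d e = u"
proof -
  have "nat d > 0"
    using \<open>d > 0\<close> by simp
  then obtain e where "e \<in> D" "nsmul (nat d) e = u"
    using D \<open>u \<in> D\<close> unfolding divisible_subgroup_def by blast
  moreover have "zsmul d e = nsmul (nat d) e"
    using \<open>d > 0\<close> zsmul_of_nat[of "nat d" e] by simp
  ultimately show thesis
    using that by simp
qed

lemma divisible_subgroupI_primes:
  assumes D: "subgroup_add D"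
    and primes: "\<And>q x. prime q \<Longrightarrow> x \<in> D \<Longrightarrow> \<exists>e\<in>D. zsmul (int q) e = x"
  shows "divisible_subgroup D"
proof -
  have "\<exists>e\<in>D. zsmul (int n) e = x" if "n > 0" "x \<in> D" for n x
    using that
  proof (induction n arbitrary: x rule: less_induct)
    case (less n)
    show ?case
    proof (cases "n = 1")
      case True
      then show ?thesis
        using less.prems by auto
    next
      case False
      then obtain q where q: "prime q" "q dvd n"
        using prime_factor_nat by blast
      from q(2) obtain n' where n: "n = q * n'"
        by (rule dvdE)
      with less.prems(1) prime_gt_1_nat[OF q(1)] have "n' < n" "n' > 0"
        by auto
      then obtain e1 where "e1 \<in> D" "zsmul (int n') e1 = x"
        using less.IH less.prems(2) by blast
      moreover obtain e where "e \<in> D" "zsmul (int q) e = e1"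
        using primes[OF q(1) \<open>e1 \<in> D\<close>] by blast
      ultimately show ?thesis
        using n by (auto simp: zsmul_mult mult.commute)
    qed
  qed
  then show ?thesis
    using D unfolding divisible_subgroup_def by (simp add: zsmul_of_nat)
qed

lemma divisible_extension_step:
  assumes D: "divisible_subgroup D" and G: "partial_hom G" "Range G \<subseteq> D" and "d \<ge> 0"
    and dom: "\<forall>k. zsmul k y \<in> Domain G \<longleftrightarrow> d dvd k"
  shows "\<exists>t\<in>D. (zsmul d y, zsmul d t) \<in> G"
proof (cases "d = 0")
  case True
  then show ?thesis
    using partial_hom_zero[OF G(1)] subgroup_add_zero[OF divisible_subgroup_subgroup[OF D]] by auto
next
  case False
  have "zsmul d y \<in> Domain G"
    using dom by simp
  then obtain u where u: "(zsmul d y, u) \<in> G"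
    by blast
  then have "u \<in> D"
    using G(2) by blast
  moreover have "d > 0"
    using False \<open>d \<ge> 0\<close> by simp
  ultimately obtain e where "e \<in> D" "zsmul d e = u"
    by (rule divisible_subgroup_zsmulE[OF D])
  with u show ?thesis
    by blast
qed

lemma divisible_extends:
  assumes D: "divisible_subgroup D" and G0: "partial_hom G0" "Range G0 \<subseteq> D"
  shows "\<exists>h\<in>endos. range h \<subseteq> D \<and> (\<forall>(a, b)\<in>G0. h a = b)"
proof (rule partial_hom_extends[OF G0 divisible_subgroup_subgroup[OF D]])
  fix G y d
  assume "partial_hom G" "Range G \<subseteq> D" "d \<ge> 0" "\<forall>k. zsmul k y \<in> Domain G \<longleftrightarrow> d dvd k"
  then show "\<exists>t\<in>D. (zsmul d y, zsmul d t) \<in> G"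
    by (rule divisible_extension_step[OF D])
qed

lemma divisible_retraction:
  assumes D: "divisible_subgroup D"
  obtains r where "retraction r D"
proof -
  have "partial_hom (Id_on D)"
    using divisible_subgroup_subgroup[OF D]
    by (intro partial_homI) (auto simp: subgroup_add_zero subgroup_add_add subgroup_add_minus)
  moreover have "Range (Id_on D) \<subseteq> D"
    by auto
  ultimately obtain r where "r \<in> endos" "range r \<subseteq> D" "\<forall>(a, b)\<in>Id_on D. r a = b"
    using divisible_extends[OF D] by blast
  then have "retraction r D"
    unfolding retraction_def by (force simp: Id_on_def)
  then show thesis
    by (rule that)
qed

lemma partial_hom_cyclic:
  assumes "annihilator y \<subseteq> annihilator z"
  shows "partial_hom (range (\<lambda>k. (zsmul k y, zsmul k z)))" (is "partial_hom ?G")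
proof (rule partial_homI)
  show "(0, 0) \<in> ?G"
    using rangeI[of "\<lambda>k. (zsmul k y, zsmul k z)" 0] by simp
next
  fix a b c d assume "(a, b) \<in> ?G" "(c, d) \<in> ?G"
  then show "(a + c, b + d) \<in> ?G"
    by (auto simp flip: zsmul_add_left)
next
  fix a b assume "(a, b) \<in> ?G"
  then show "(- a, - b) \<in> ?G"
    by (auto simp flip: zsmul_minus_left)
next
  fix a b c assume ab: "(a, b) \<in> ?G" and ac: "(a, c) \<in> ?G"
  from ab obtain k where "a = zsmul k y" "b = zsmul k z"
    by auto
  moreover from ac obtain l where "a = zsmul l y" "c = zsmul l z"
    by auto
  moreover from calculation have "k - l \<in> annihilator y"
    by (simp add: zsmul_diff_left)
  then have "zsmul (k - l) z = 0"
    using assms by auto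
  ultimately show "b = c"
    by (simp add: zsmul_diff_left)
qed

lemma divisible_cyclic_extends:
  assumes D: "divisible_subgroup D" and "z \<in> D" and ann: "annihilator y \<subseteq> annihilator z"
  obtains h where "h \<in> endos" "range h \<subseteq> D" "h y = z"
proof -
  have "Range (range (\<lambda>k. (zsmul k y, zsmul k z))) \<subseteq> D"
    using subgroup_add_zsmul[OF divisible_subgroup_subgroup[OF D] \<open>z \<in> D\<close>] by auto
  then obtain h where "h \<in> endos" "range h \<subseteq> D" "\<forall>k. h (zsmul k y) = zsmul k z"
    using divisible_extends[OF D partial_hom_cyclic[OF ann]] by auto
  then show thesis
    using that[of h] by (metis zsmul_1)
qed

section \<open>Retractions in a centrally essential endomorphism ring\<close>

lemma retraction_commute:
  assumes ce: "centrally_essential (End_ring TYPE('a))"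
    and r: "retraction r (S :: 'a::ab_group_add set)" and h: "h \<in> endos"
  shows "r (h x) = h (r x)"
proof -
  have "r \<in> endos" "r \<circ> r = r"
    using r retraction_idem[OF r] by (auto simp: retraction_def)
  then have "r \<in> ring_center (End_ring TYPE('a))"
    using ring.centrally_essential_idempotent_central[OF ring_End_ring ce] by simp
  with h show ?thesis
    by (simp add: End_ring_center_iff)
qed

lemma retraction_invariant:
  assumes ce: "centrally_essential (End_ring TYPE('a))"
    and r: "retraction r (S :: 'a::ab_group_add set)" and h: "h \<in> endos" and "x \<in> S"
  shows "h x \<in> S"
proof -
  have "h x = r (h x)"
    using retraction_commute[OF ce r h] r \<open>x \<in> S\<close> by (simp add: retraction_def)
  then show ?thesis
    using r by (metis retraction_def range_subsetD)
qed

lemma divisible_retraction_kernel: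
  assumes ce: "centrally_essential (End_ring TYPE('a))" and D: "divisible_subgroup D"
    and r: "retraction r (D :: 'a::ab_group_add set)" and "r y = 0"
    and "z \<in> D" and ann: "annihilator y \<subseteq> annihilator z"
  shows "z = 0"
proof -
  obtain h where h: "h \<in> endos" "h y = z"
    using divisible_cyclic_extends[OF D \<open>z \<in> D\<close> ann] by blast
  have "z = r (h y)"
    using r \<open>z \<in> D\<close> h by (simp add: retraction_def)
  also have "\<dots> = h (r y)"
    by (rule retraction_commute[OF ce r h(1)])
  finally show ?thesis
    using \<open>r y = 0\<close> h by simp
qed

lemma divisible_retraction_kernel_torsion_free:
  assumes ce: "centrally_essential (End_ring TYPE('a))" and D: "divisible_subgroup D"
    and r: "retraction r (D :: 'a::ab_group_add set)" and "r y = 0"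
    and "annihilator y = {0}" and "z \<in> D"
  shows "z = 0"
  using divisible_retraction_kernel[OF ce D r \<open>r y = 0\<close> \<open>z \<in> D\<close>] \<open>annihilator y = {0}\<close> by simp

lemma retraction_cyclic_hom:
  assumes r: "retraction r (multiples x)" and ann: "annihilator x \<subseteq> annihilator w"
  obtains h where "h \<in> endos" "h x = w"
proof -
  define h where "h a = zsmul (SOME k. r a = zsmul k x) w" for a
  have h_eq: "h a = zsmul k w" if "r a = zsmul k x" for a k
  proof -
    have "\<exists>k. r a = zsmul k x"
      using r unfolding retraction_def by blast
    then have "r a = zsmul (SOME k. r a = zsmul k x) x"
      by (rule someI_ex)
    with that have "(SOME k. r a = zsmul k x) - k \<in> annihilator x"
      by (simp add: zsmul_diff_left)
    with ann have "(SOME k. r a = zsmul k x) - k \<in> annihilator w"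
      by blast
    then show ?thesis
      unfolding h_def by (simp add: zsmul_diff_left)
  qed
  have "h \<in> endos"
  proof (rule endosI)
    fix a b
    have "r a \<in> multiples x" "r b \<in> multiples x"
      using r by (auto simp: retraction_def)
    then obtain k l where k: "r a = zsmul k x" and l: "r b = zsmul l x"
      by (auto elim!: multiplesE)
    then have "r (a + b) = zsmul (k + l) x"
      using r by (simp add: retraction_def endos_add zsmul_add_left)
    then have "h (a + b) = zsmul (k + l) w"
      by (rule h_eq)
    then show "h (a + b) = h a + h b"
      using h_eq[OF k] h_eq[OF l] by (simp add: zsmul_add_left)
  qed
  moreover have "h x = w"
    using h_eq[of x 1] r by (simp add: retraction_def)
  ultimately show thesis
    by (rule that)
qed

lemma cyclic_retraction_absorbs:
  assumes ce: "centrally_essential (End_ring TYPE('a))"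
    and r: "retraction r (multiples (y :: 'a::ab_group_add))"
    and ann: "annihilator y \<subseteq> annihilator w"
  shows "w \<in> multiples y"
proof -
  have r_endo: "r \<in> endos" and "r y = y" and rw: "r w \<in> multiples y"
    using r by (auto simp: retraction_def)
  define w' where "w' = w - r w"
  have "annihilator y \<subseteq> annihilator (r w)"
    using rw by (rule annihilator_multiple)
  with ann have "annihilator y \<subseteq> annihilator w'"
    unfolding w'_def using annihilator_diff by blast
  then obtain h where h: "h \<in> endos" "h y = w'"
    by (rule retraction_cyclic_hom[OF r])
  have "w' = r (h y)"
    using retraction_commute[OF ce r h(1), of y] \<open>r y = y\<close> h(2) by simp
  also have "\<dots> = 0"
    unfolding h(2) w'_def by (simp add: endos_diff[OF r_endo] retraction_idem[OF r])
  finally have "r w = w"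
    unfolding w'_def by (metis right_minus_eq)
  with rw show ?thesis
    by simp
qed

section \<open>Elements of prime power order\<close>

lemma annihilator_gcd:
  assumes "k \<in> annihilator x" "l \<in> annihilator x"
  shows "gcd k l \<in> annihilator x"
proof -
  obtain a b where "a * k + b * l = gcd k l"
    using bezout_int by blast
  then have "zsmul (gcd k l) x = zsmul a (zsmul k x) + zsmul b (zsmul l x)"
    by (metis zsmul_add_left zsmul_mult)
  with assms show ?thesis
    by simp
qed

lemma annihilator_prime_power:
  fixes p :: int
  assumes p: "prime p" and "zsmul (p ^ Suc N) x = 0" and "zsmul (p ^ N) x \<noteq> 0"
  shows "annihilator x = {k. p ^ Suc N dvd k}"
proof
  show "{k. p ^ Suc N dvd k} \<subseteq> annihilator x"
    using assms(2) zsmul_eq_0_dvd by auto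
  show "annihilator x \<subseteq> {k. p ^ Suc N dvd k}"
  proof
  fix k assume "k \<in> annihilator x"
  then have g: "gcd k (p ^ Suc N) \<in> annihilator x"
    using assms(2) by (intro annihilator_gcd) simp_all
  obtain r where "r \<le> Suc N" and r: "gcd k (p ^ Suc N) = p ^ r"
    using divides_primepow[OF p, of "gcd k (p ^ Suc N)" "Suc N"] by auto
  have "r = Suc N"
  proof (rule ccontr)
    assume "r \<noteq> Suc N"
    with \<open>r \<le> Suc N\<close> have "p ^ N = p ^ (N - r) * p ^ r"
      by (simp flip: power_add)
    then have "zsmul (p ^ N) x = zsmul (p ^ (N - r)) (zsmul (gcd k (p ^ Suc N)) x)"
      unfolding r by (simp add: zsmul_mult)
    then have "zsmul (p ^ N) x = 0"
      using g by simp
    with assms(3) show False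
      by contradiction
  qed
  then show "k \<in> {k. p ^ Suc N dvd k}"
    using r by (metis gcd_dvd1 mem_Collect_eq)
  qed
qed

lemma annihilator_prime:
  fixes p :: int
  assumes "prime p" and "zsmul p u = 0" and "u \<noteq> 0"
  shows "annihilator u = {k. p dvd k}"
  using annihilator_prime_power[of p 0 u] assms by simp

lemma zsmul_coprime_inverse:
  assumes "coprime q n" and "zsmul n x = 0"
  obtains c where "zsmul q (zsmul c x) = x"
proof -
  obtain a b where "a * q + b * n = 1"
    using bezout_int[of q n] assms(1) by (auto simp: coprime_iff_gcd_eq_1)
  then have "zsmul q (zsmul a x) = x - zsmul b (zsmul n x)"
    by (simp flip: zsmul_mult zsmul_add_left add: eq_diff_eq mult.commute[of q])
  with assms(2) show thesis
    using that by simp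
qed

lemma prime_order_generator:
  fixes p :: int
  assumes p: "prime p" and "zsmul p s = 0" and "u \<in> multiples s" and "u \<noteq> 0"
  shows "s \<in> multiples u"
proof -
  obtain a where a: "u = zsmul a s"
    using assms(3) by blast
  have "\<not> p dvd a"
    using zsmul_eq_0_dvd[OF assms(2)] a \<open>u \<noteq> 0\<close> by blast
  then have "coprime a p"
    using prime_imp_coprime[OF p] by (simp add: ac_simps)
  then obtain c where "zsmul a (zsmul c s) = s"
    using zsmul_coprime_inverse assms(2) by blast
  then have "s = zsmul c u"
    by (simp add: a zsmul_commute)
  then show ?thesis
    by auto
qed

lemma finite_height_witness:
  assumes "s \<notin> range (zsmul (p ^ j))"
  shows "\<exists>N y. s = zsmul (p ^ N) y \<and> s \<notin> range (zsmul (p ^ Suc N))"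
  using assms
proof (induction j)
  case 0
  then show ?case
    using rangeI[of "zsmul 1" s] by simp
next
  case (Suc j)
  then show ?case
    by (cases "s \<in> range (zsmul (p ^ j))") auto
qed

lemma pure_of_finite_height:
  fixes p :: int
  assumes p: "prime p" and s: "s = zsmul (p ^ N) y" "zsmul p s = 0"
    and height: "s \<notin> range (zsmul (p ^ Suc N))"
  shows "multiples y \<inter> range (zsmul (p ^ Suc N)) = {0}"
proof -
  have "s \<noteq> 0"
    using height rangeI[of "zsmul (p ^ Suc N)" 0] by auto
  have y_order: "zsmul (p ^ Suc N) y = 0"
    using s by (simp add: zsmul_mult)
  have "zsmul k y = 0" if "zsmul k y = zsmul (p ^ Suc N) a" for k a
  proof -
    let ?g = "gcd k (p ^ Suc N)"
    obtain \<alpha> \<beta> where "\<alpha> * k + \<beta> * p ^ Suc N = ?g"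
      using bezout_int by blast
    then have "zsmul ?g y = zsmul \<alpha> (zsmul k y) + zsmul \<beta> (zsmul (p ^ Suc N) y)"
      by (metis zsmul_add_left zsmul_mult)
    then have g: "zsmul ?g y = zsmul (p ^ Suc N) (zsmul \<alpha> a)"
      using that y_order by (simp add: zsmul_commute)
    obtain r where "r \<le> Suc N" and r: "?g = p ^ r"
      using divides_primepow[OF p, of ?g "Suc N"] by auto
    show ?thesis
    proof (cases "r = Suc N")
      case True
      then have "p ^ Suc N dvd k"
        using r by (metis gcd_dvd1)
      with y_order show ?thesis
        by (rule zsmul_eq_0_dvd)
    next
      case False
      with \<open>r \<le> Suc N\<close> have "p ^ N = p ^ (N - r) * p ^ r"
        by (simp flip: power_add)
      then have "s = zsmul (p ^ (N - r)) (zsmul ?g y)"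
        unfolding s r by (simp add: zsmul_mult)
      also have "\<dots> = zsmul (p ^ Suc N) (zsmul (p ^ (N - r)) (zsmul \<alpha> a))"
        unfolding g by (rule zsmul_commute)
      finally show ?thesis
        using height by blast
    qed
  qed
  then have "c = 0" if "c \<in> multiples y" "c \<in> range (zsmul (p ^ Suc N))" for c
    using that by (metis multiplesE rangeE)
  moreover have "0 \<in> multiples y" "0 \<in> range (zsmul (p ^ Suc N))"
    using multiplesI[of 0 y] rangeI[of "zsmul (p ^ Suc N)" 0] by simp_all
  ultimately show ?thesis
    by blast
qed

lemma partial_hom_pure:
  assumes pure: "multiples x \<inter> range (zsmul m) = {0}"
  shows "partial_hom {(zsmul k x + zsmul m a, zsmul k x) | k a. True}" (is "partial_hom ?G")
proof -
  have mem: "(zsmul k x + zsmul m a, zsmul k x) \<in> ?G" for k a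
    by blast
  show ?thesis
  proof (rule partial_homI)
    show "(0, 0) \<in> ?G"
      using mem[of 0 0] by simp
  next
    fix a b c d assume "(a, b) \<in> ?G" "(c, d) \<in> ?G"
    then obtain k1 a1 k2 a2 where "a = zsmul k1 x + zsmul m a1" "b = zsmul k1 x"
      "c = zsmul k2 x + zsmul m a2" "d = zsmul k2 x"
      by blast
    then show "(a + c, b + d) \<in> ?G"
      using mem[of "k1 + k2" "a1 + a2"] by (simp add: zsmul_add_left zsmul_add_right algebra_simps)
  next
    fix a b assume "(a, b) \<in> ?G"
    then obtain k a1 where "a = zsmul k x + zsmul m a1" "b = zsmul k x"
      by blast
    then show "(- a, - b) \<in> ?G"
      using mem[of "- k" "- a1"] by (simp add: zsmul_minus_left zsmul_minus_right)
  next
    fix a b c assume "(a, b) \<in> ?G" "(a, c) \<in> ?G"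
    then obtain k1 a1 k2 a2 where a: "a = zsmul k1 x + zsmul m a1" "a = zsmul k2 x + zsmul m a2"
      and bc: "b = zsmul k1 x" "c = zsmul k2 x"
      by blast
    have "zsmul (k1 - k2) x = zsmul m (a2 - a1)"
      using a by (simp add: zsmul_diff_left zsmul_diff_right algebra_simps)
    then have "zsmul (k1 - k2) x = 0"
      using pure by blast
    then show "b = c"
      using bc by (simp add: zsmul_diff_left)
  qed
qed

lemma pure_extension_step:
  assumes m: "m \<noteq> 0" and ord: "annihilator x = {k. m dvd k}"
    and G: "partial_hom G" "Range G \<subseteq> multiples x" and my: "(zsmul m y, 0) \<in> G"
    and dom: "\<forall>k. zsmul k y \<in> Domain G \<longleftrightarrow> d dvd k"
  shows "\<exists>t\<in>multiples x. (zsmul d y, zsmul d t) \<in> G"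
proof -
  obtain q where q: "m = d * q"
    using dom my by blast
  with m have "q \<noteq> 0"
    by auto
  have "zsmul d y \<in> Domain G"
    using dom by simp
  then obtain u where u: "(zsmul d y, u) \<in> G"
    by blast
  then obtain j where j: "u = zsmul j x"
    using G(2) by blast
  have "(zsmul m y, zsmul (q * j) x) \<in> G"
    using partial_hom_zsmul[OF G(1) u, of q] q j by (simp add: mult.commute flip: zsmul_mult)
  then have "zsmul (q * j) x = 0"
    using my partial_hom_unique[OF G(1)] by blast
  then have "q * j \<in> annihilator x"
    by simp
  then have "d * q dvd q * j"
    using ord q by simp
  then have "q * d dvd q * j"
    by (simp add: mult.commute)
  then obtain j' where "j = d * j'"
    using \<open>q \<noteq> 0\<close> by (auto elim!: dvdE)
  then have "u = zsmul d (zsmul j' x)"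
    using j by (simp add: zsmul_mult)
  with u show ?thesis
    by blast
qed

lemma pure_cyclic_retraction:
  assumes m: "m \<noteq> 0" and ord: "annihilator x = {k. m dvd k}"
    and pure: "multiples x \<inter> range (zsmul m) = {0}"
  obtains r where "retraction r (multiples x)"
proof -
  \<comment> \<open>the projection of \<open>multiples x + m A\<close> onto \<open>multiples x\<close> along \<open>m A\<close>\<close>
  let ?G0 = "{(zsmul k x + zsmul m a, zsmul k x) | k a. True}"
  have "Range ?G0 \<subseteq> multiples x"
    by auto
  then obtain h where h: "h \<in> endos" "range h \<subseteq> multiples x" "\<forall>(a, b)\<in>?G0. h a = b"
  proof (rule partial_hom_extends[OF partial_hom_pure[OF pure] _ subgroup_multiples, elim_format])
    fix G y d assume G: "partial_hom G" "?G0 \<subseteq> G" "Range G \<subseteq> multiples x"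
      and dom: "\<forall>k. zsmul k y \<in> Domain G \<longleftrightarrow> d dvd k"
    have "(zsmul 0 x + zsmul m y, zsmul 0 x) \<in> ?G0"
      by blast
    then have "(zsmul m y, 0) \<in> ?G0"
      by simp
    then have "(zsmul m y, 0) \<in> G"
      using G(2) by blast
    then show "\<exists>t\<in>multiples x. (zsmul d y, zsmul d t) \<in> G"
      using pure_extension_step[OF m ord G(1,3) _ dom] by blast
  qed blast
  have "(zsmul k x + zsmul m 0, zsmul k x) \<in> ?G0" for k
    by blast
  then have "h (zsmul k x) = zsmul k x" for k
    using h(3) by fastforce
  then have "retraction h (multiples x)"
    using h(1,2) by (auto simp: retraction_def)
  then show thesis
    by (rule that)
qed

section \<open>Elements of prime order\<close>

lemma socle_cyclic_of_finite_height:
  fixes p :: int and s :: "'a::ab_group_add"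
  assumes ce: "centrally_essential (End_ring TYPE('a))" and p: "prime p"
    and s: "zsmul p s = 0" "s \<notin> range (zsmul (p ^ j))" and z: "zsmul p z = 0"
  shows "z \<in> multiples s"
proof -
  obtain N y where sy: "s = zsmul (p ^ N) y" and height: "s \<notin> range (zsmul (p ^ Suc N))"
    using finite_height_witness[OF s(2)] by blast
  have "s \<noteq> 0"
    using height rangeI[of "zsmul (p ^ Suc N)" 0] by auto
  moreover have "zsmul (p ^ Suc N) y = 0"
    using s(1) sy by (simp add: zsmul_mult)
  ultimately have ord: "annihilator y = {k. p ^ Suc N dvd k}"
    using annihilator_prime_power[OF p] sy by simp
  moreover have "p ^ Suc N \<noteq> 0"
    using p by auto
  ultimately obtain r where "retraction r (multiples y)"
    using pure_cyclic_retraction pure_of_finite_height[OF p sy s(1) height] by blast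
  moreover have "annihilator y \<subseteq> annihilator z"
    using ord zsmul_eq_0_dvd[OF z] by (auto simp: dvd_mult_left)
  ultimately have "z \<in> multiples y"
    by (rule cyclic_retraction_absorbs[OF ce])
  then obtain a where a: "z = zsmul a y"
    by blast
  then have "p * a \<in> annihilator y"
    using z by (simp add: zsmul_mult)
  then have "p * p ^ N dvd p * a"
    using ord by simp
  then obtain a' where "a = p ^ N * a'"
    using p by (auto elim!: dvdE)
  then have "z = zsmul a' s"
    using a sy by (simp add: zsmul_mult mult.commute)
  then show ?thesis
    by auto
qed

lemma divisible_by_prime_of_infinite_height:
  fixes w :: "'a::ab_group_add"
  assumes inf: "\<forall>(s::'a) j. zsmul p s = 0 \<longrightarrow> s \<in> range (zsmul (p ^ j))"
  shows "zsmul (p ^ j) w = 0 \<Longrightarrow> w \<in> range (zsmul p)"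
proof (induction j arbitrary: w)
  case 0
  then show ?case
    using rangeI[of "zsmul p" 0] by simp
next
  case (Suc j)
  have "zsmul p (zsmul (p ^ j) w) = 0"
    using Suc.prems by (simp add: zsmul_mult mult.commute flip: zsmul_mult)
  then have "zsmul (p ^ j) w \<in> range (zsmul (p ^ Suc j))"
    using inf by blast
  then obtain c where c: "zsmul (p ^ j) w = zsmul (p ^ Suc j) c"
    by blast
  have "zsmul (p ^ j) (w - zsmul p c) = 0"
    using c by (simp add: zsmul_diff_right mult.commute flip: zsmul_mult)
  then obtain b where "w - zsmul p c = zsmul p b"
    using Suc.IH by blast
  then have "w = zsmul p (b + c)"
    by (simp add: zsmul_add_right algebra_simps)
  then show ?case
    by blast
qed

lemma prufer_sequence_exists:
  fixes z :: "'a::ab_group_add"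
  assumes inf: "\<forall>(s::'a) j. zsmul p s = 0 \<longrightarrow> s \<in> range (zsmul (p ^ j))" and "zsmul p z = 0"
  shows "\<exists>zs. (\<forall>i. zs i = zsmul p (zs (Suc i))) \<and> (\<forall>i. zsmul (p ^ i) (zs i) = z)"
proof -
  have "\<exists>y. zsmul (p ^ Suc n) y = z \<and> x = zsmul p y" if "zsmul (p ^ n) x = z" for n x
  proof -
    have "zsmul (p ^ Suc n) x = 0"
      using that \<open>zsmul p z = 0\<close> by (simp add: zsmul_mult)
    then obtain y where "x = zsmul p y"
      using divisible_by_prime_of_infinite_height[OF inf] by blast
    moreover have "zsmul (p ^ Suc n) y = zsmul (p ^ n) (zsmul p y)"
      by (simp only: power_Suc2 zsmul_mult)
    ultimately show ?thesis
      using that by auto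
  qed
  then have "\<exists>zs. \<forall>i. zsmul (p ^ i) (zs i) = z \<and> zs i = zsmul p (zs (Suc i))"
    by (intro dependent_nat_choice[of "\<lambda>i x. zsmul (p ^ i) x = z"]) auto
  then show ?thesis
    by blast
qed

lemma subgroup_Union_multiples_chain:
  assumes chain: "\<And>i. zs i \<in> multiples (zs (Suc i))"
  shows "subgroup_add (\<Union>i. multiples (zs i))" (is "subgroup_add ?D")
proof -
  have "multiples (zs i) \<subseteq> multiples (zs (Suc i))" for i
    using chain multiples_trans by blast
  then have up: "multiples (zs i) \<subseteq> multiples (zs j)" if "i \<le> j" for i j
    using lift_Suc_mono_le[of "\<lambda>i. multiples (zs i)", OF _ that] by blast
  show ?thesis
    unfolding subgroup_add_def
  proof (intro conjI ballI)
    show "0 \<in> ?D"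
      using subgroup_add_zero[OF subgroup_multiples] by blast
  next
    fix a b assume "a \<in> ?D" "b \<in> ?D"
    then obtain i j where "a \<in> multiples (zs i)" "b \<in> multiples (zs j)"
      by blast
    then have "a \<in> multiples (zs (max i j))" "b \<in> multiples (zs (max i j))"
      using up[of i "max i j"] up[of j "max i j"] by auto
    then have "a + b \<in> multiples (zs (max i j))"
      by (rule subgroup_add_add[OF subgroup_multiples])
    then show "a + b \<in> ?D"
      by blast
  next
    fix a assume "a \<in> ?D"
    then show "- a \<in> ?D"
      using subgroup_add_minus[OF subgroup_multiples] by blast
  qed
qed

lemma prufer_subgroup_divisible:
  fixes p :: int
  assumes p: "prime p" and step: "\<forall>i. zs i = zsmul p (zs (Suc i))"
    and top: "\<forall>i. zsmul (p ^ i) (zs i) = z" and "zsmul p z = 0"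
  shows "divisible_subgroup (\<Union>i. multiples (zs i))" (is "divisible_subgroup ?D")
proof (rule divisible_subgroupI_primes)
  show "subgroup_add ?D"
    using step by (intro subgroup_Union_multiples_chain) (metis multiplesI)
next
  fix q :: nat and x assume q: "prime q" and "x \<in> ?D"
  then obtain k i where x: "x = zsmul k (zs i)"
    by blast
  show "\<exists>e\<in>?D. zsmul (int q) e = x"
  proof (cases "int q = p")
    case True
    have "x = zsmul k (zsmul p (zs (Suc i)))"
      using x step by metis
    then have "zsmul (int q) (zsmul k (zs (Suc i))) = x"
      using True by (simp add: zsmul_commute)
    then show ?thesis
      by blast
  next
    case False
    then have "coprime (int q) (p ^ Suc i)"
      using primes_coprime[of "int q" p] q p by simp
    moreover have "zsmul (p ^ Suc i) (zs i) = 0"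
      using top \<open>zsmul p z = 0\<close> by (metis power_Suc zsmul_mult)
    ultimately obtain c where "zsmul (int q) (zsmul c (zs i)) = zs i"
      by (rule zsmul_coprime_inverse)
    then have "zsmul (int q) (zsmul k (zsmul c (zs i))) = x"
      using x by (metis zsmul_commute)
    moreover have "zsmul k (zsmul c (zs i)) \<in> ?D"
      by (auto simp flip: zsmul_mult)
    ultimately show ?thesis
      by blast
  qed
qed

lemma prufer_socle:
  fixes p :: int
  assumes p: "prime p" and top: "\<forall>i. zsmul (p ^ i) (zs i) = z" and z: "zsmul p z = 0" "z \<noteq> 0"
    and w: "w \<in> (\<Union>i. multiples (zs i))" "zsmul p w = 0"
  shows "w \<in> multiples z"
proof -
  obtain k i where wk: "w = zsmul k (zs i)"
    using w(1) by blast
  have "zsmul (p ^ Suc i) (zs i) = 0"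
    using top z(1) by (metis power_Suc zsmul_mult)
  moreover have "zsmul (p ^ i) (zs i) \<noteq> 0"
    using top z(2) by simp
  ultimately have ord: "annihilator (zs i) = {k. p ^ Suc i dvd k}"
    by (rule annihilator_prime_power[OF p])
  have "p * k \<in> annihilator (zs i)"
    using w(2) wk by (simp add: zsmul_mult)
  then have "p * p ^ i dvd p * k"
    using ord by simp
  then obtain k' where "k = p ^ i * k'"
    using p by (auto elim!: dvdE)
  then have "w = zsmul k' z"
    using wk top by (metis mult.commute zsmul_mult)
  then show ?thesis
    by auto
qed

lemma socle_cyclic_of_infinite_height:
  fixes p :: int and z :: "'a::ab_group_add"
  assumes ce: "centrally_essential (End_ring TYPE('a))" and p: "prime p"
    and inf: "\<forall>(s::'a) j. zsmul p s = 0 \<longrightarrow> s \<in> range (zsmul (p ^ j))"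
    and z: "zsmul p z = 0" "z \<noteq> 0" and u: "zsmul p u = 0"
  shows "u \<in> multiples z"
proof -
  obtain zs where step: "\<forall>i. zs i = zsmul p (zs (Suc i))" and top: "\<forall>i. zsmul (p ^ i) (zs i) = z"
    using prufer_sequence_exists[OF inf z(1)] by blast
  \<comment> \<open>the quasicyclic subgroup generated by the \<open>p\<^sup>i\<close>-th roots \<open>zs i\<close> of \<open>z\<close>\<close>
  let ?D = "\<Union>i. multiples (zs i)"
  have D: "divisible_subgroup ?D"
    by (rule prufer_subgroup_divisible[OF p step top z(1)])
  then obtain r where r: "retraction r ?D"
    by (rule divisible_retraction)
  have r_endo: "r \<in> endos"
    using r by (simp add: retraction_def)
  define y where "y = u - r u"
  have "r y = 0"
    unfolding y_def by (simp add: endos_diff[OF r_endo] retraction_idem[OF r])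
  show ?thesis
  proof (cases "y = 0")
    case True
    then have "u \<in> ?D"
      using r unfolding y_def retraction_def by (metis range_subsetD right_minus_eq)
    then show ?thesis
      using prufer_socle[OF p top z _ u] by blast
  next
    case False
    have "zsmul p y = 0"
      unfolding y_def using u r_endo by (simp add: zsmul_diff_right flip: endos_zsmul[OF r_endo])
    then have "annihilator y \<subseteq> annihilator z"
      using annihilator_prime[OF p _ False] zsmul_eq_0_dvd[OF z(1)] by auto
    moreover have "z \<in> ?D"
      using top[rule_format, of 0] by (metis UNIV_I UN_I multiples_self power_0 zsmul_1)
    ultimately have "z = 0"
      using divisible_retraction_kernel[OF ce D r \<open>r y = 0\<close>] by blast
    with z(2) show ?thesis
      by contradiction
  qed
qed

lemma prime_socle_cyclic:
  fixes p :: int and u :: "'a::ab_group_add"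
  assumes ce: "centrally_essential (End_ring TYPE('a))" and p: "prime p"
    and u: "zsmul p u = 0" "u \<noteq> 0" and z: "zsmul p z = 0"
  shows "z \<in> multiples u"
proof (cases "\<forall>(s::'a) j. zsmul p s = 0 \<longrightarrow> s \<in> range (zsmul (p ^ j))")
  case True
  then show ?thesis
    by (rule socle_cyclic_of_infinite_height[OF ce p _ u z])
next
  case False
  then obtain s :: 'a and j where s: "zsmul p s = 0" "s \<notin> range (zsmul (p ^ j))"
    by blast
  have "s \<in> multiples u"
    using prime_order_generator[OF p s(1)] socle_cyclic_of_finite_height[OF ce p s u(1)] u(2) by blast
  moreover have "z \<in> multiples s"
    by (rule socle_cyclic_of_finite_height[OF ce p s z])
  ultimately show ?thesis
    by (rule multiples_trans)
qed

section \<open>Torsion elements\<close>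

lemma annihilator_zsmul_order:
  assumes "annihilator v = {k. q * n dvd k}" and "q \<noteq> 0"
  shows "annihilator (zsmul q v) = {k. n dvd k}"
proof -
  have "k \<in> annihilator (zsmul q v) \<longleftrightarrow> q * k \<in> annihilator v" for k
    by (simp add: zsmul_mult zsmul_commute[of k])
  with assms show ?thesis
    by auto
qed

lemma torsion_order_absorbs:
  fixes v :: "'a::ab_group_add"
  assumes ce: "centrally_essential (End_ring TYPE('a))"
  shows "n > 0 \<Longrightarrow> annihilator v = {k. int n dvd k} \<Longrightarrow> zsmul (int n) w = 0 \<Longrightarrow> w \<in> multiples v"
proof (induction n arbitrary: v w rule: less_induct)
  case (less n)
  show ?case
  proof (cases "n = 1")
    case True
    then show ?thesis
      using less.prems(3) multiplesI[of 0 v] by simp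
  next
    case False
    then obtain q where q: "prime q" "q dvd n"
      using prime_factor_nat by blast
    from q(2) obtain n' where n: "n = q * n'"
      by (rule dvdE)
    with less.prems(1) prime_gt_1_nat[OF q(1)] have n': "n' < n" "n' > 0"
      by auto
    have "annihilator v = {k. int q * int n' dvd k}" "int q \<noteq> 0"
      using less.prems(2) q(1) by (simp_all add: n prime_gt_0_nat)
    then have "annihilator (zsmul (int q) v) = {k. int n' dvd k}"
      by (rule annihilator_zsmul_order)
    moreover have "zsmul (int n') (zsmul (int q) w) = 0"
      using less.prems(3) by (simp add: n mult.commute flip: zsmul_mult)
    ultimately obtain k where k: "zsmul (int q) w = zsmul k (zsmul (int q) v)"
      using less.IH[OF n'] by blast
    define u where "u = zsmul (int n') v"
    have "int n \<in> annihilator v"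
      using less.prems(2) by simp
    then have "zsmul (int q) u = 0"
      by (simp add: u_def n flip: zsmul_mult)
    moreover have "u \<noteq> 0"
    proof
      assume "u = 0"
      then have "int n' \<in> annihilator v"
        by (simp add: u_def)
      then have "n dvd n'"
        using less.prems(2) by simp
      with n' show False
        by (simp add: nat_dvd_not_less)
    qed
    moreover have "zsmul (int q) (w - zsmul k v) = 0"
      using k by (simp add: zsmul_diff_right zsmul_commute)
    moreover have "prime (int q)"
      using q(1) by simp
    ultimately have "w - zsmul k v \<in> multiples u"
      using prime_socle_cyclic[OF ce] by blast
    then obtain l where "w = zsmul k v + zsmul l u"
      by (metis diff_eq_eq add.commute multiplesE)
    then have "w = zsmul (k + l * int n') v"
      by (simp add: u_def zsmul_add_left zsmul_mult)
    then show ?thesis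
      by auto
  qed
qed

lemma torsion_absorbs:
  fixes v :: "'a::ab_group_add"
  assumes ce: "centrally_essential (End_ring TYPE('a))"
    and "annihilator v \<noteq> {0}" and ann: "annihilator v \<subseteq> annihilator w"
  shows "w \<in> multiples v"
proof -
  have "subgroup_add {0::'a}"
    by (simp add: subgroup_add_def)
  from subgroup_order_ideal[OF this, of v] obtain d
    where "d \<ge> 0" and "\<forall>k. zsmul k v \<in> {0} \<longleftrightarrow> d dvd k"
    by blast
  then have d: "annihilator v = {k. d dvd k}"
    by (simp add: annihilator_def)
  have "d \<noteq> 0"
  proof
    assume "d = 0"
    then have "annihilator v = {0}"
      using d by auto
    with assms(2) show False
      by contradiction
  qed
  with \<open>d \<ge> 0\<close> have "nat d > 0" and d_int: "int (nat d) = d"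
    by simp_all
  have "annihilator v = {k. int (nat d) dvd k}"
    using d d_int by simp
  moreover have "d \<in> annihilator w"
    using subsetD[OF ann, of d] d by simp
  then have "zsmul (int (nat d)) w = 0"
    using d_int by simp
  ultimately show ?thesis
    by (rule torsion_order_absorbs[OF ce \<open>nat d > 0\<close>])
qed

lemma torsion_endos_commute:
  fixes v :: "'a::ab_group_add"
  assumes ce: "centrally_essential (End_ring TYPE('a))"
    and "annihilator v \<noteq> {0}" and f: "f \<in> endos" and g: "g \<in> endos"
  shows "f (g v) = g (f v)"
proof -
  obtain k l where "f v = zsmul k v" "g v = zsmul l v"
    using torsion_absorbs[OF ce assms(2) annihilator_endo] f g by (metis multiplesE)
  then show ?thesis
    using f g by (simp add: endos_zsmul zsmul_commute)
qed

section \<open>Groups with a non-zero divisible subgroup\<close>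

definition saturation :: "'a::ab_group_add set \<Rightarrow> 'a set" where
  "saturation H = {x. \<exists>n. n \<noteq> 0 \<and> zsmul n x \<in> H}"

lemma saturationI: "n \<noteq> 0 \<Longrightarrow> zsmul n x \<in> H \<Longrightarrow> x \<in> saturation H"
  unfolding saturation_def by blast

lemma saturationE:
  assumes "x \<in> saturation H"
  obtains n where "n \<noteq> 0" "zsmul n x \<in> H"
  using assms unfolding saturation_def by blast

lemma saturation_zero_iff: "x \<in> saturation {0} \<longleftrightarrow> annihilator x \<noteq> {0}"
proof -
  have "annihilator x \<noteq> {0} \<longleftrightarrow> (\<exists>n. n \<noteq> 0 \<and> n \<in> annihilator x)"
    using zero_in_annihilator[of x] by blast
  then show ?thesis
    by (simp add: saturation_def)
qed

lemma subgroup_inter_saturation: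
  assumes D: "subgroup_add D" and H: "subgroup_add H"
  shows "subgroup_add (D \<inter> saturation H)"
  unfolding subgroup_add_def
proof (intro conjI ballI)
  have "zsmul 1 0 \<in> H"
    using subgroup_add_zero[OF H] by simp
  then have "0 \<in> saturation H"
    by (rule saturationI[rotated]) simp
  then show "0 \<in> D \<inter> saturation H"
    using subgroup_add_zero[OF D] by blast
next
  fix a b assume "a \<in> D \<inter> saturation H" "b \<in> D \<inter> saturation H"
  then obtain n m where a: "a \<in> D" "n \<noteq> 0" "zsmul n a \<in> H"
    and b: "b \<in> D" "m \<noteq> 0" "zsmul m b \<in> H"
    by (auto elim!: saturationE)
  have "zsmul (n * m) (a + b) = zsmul m (zsmul n a) + zsmul n (zsmul m b)"
    by (simp add: zsmul_add_right zsmul_mult zsmul_commute[of n])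
  also have "\<dots> \<in> H"
    using a(3) b(3) H by (simp add: subgroup_add_add subgroup_add_zsmul)
  finally have "a + b \<in> saturation H"
    by (rule saturationI[rotated]) (use a(2) b(2) in simp)
  with a(1) b(1) D show "a + b \<in> D \<inter> saturation H"
    by (simp add: subgroup_add_add)
next
  fix a assume "a \<in> D \<inter> saturation H"
  then obtain n where "a \<in> D" "n \<noteq> 0" "zsmul n a \<in> H"
    by (auto elim!: saturationE)
  moreover from this have "zsmul n (- a) \<in> H"
    using H by (simp add: zsmul_minus_right subgroup_add_minus)
  ultimately show "- a \<in> D \<inter> saturation H"
    using D by (simp add: subgroup_add_minus saturationI)
qed

lemma divisible_inter_saturation:
  assumes D: "divisible_subgroup D" and H: "subgroup_add H"
  shows "divisible_subgroup (D \<inter> saturation H)"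
  unfolding divisible_subgroup_def
proof (intro conjI ballI allI impI)
  show "subgroup_add (D \<inter> saturation H)"
    using subgroup_inter_saturation[OF divisible_subgroup_subgroup[OF D] H] .
next
  fix d n assume d: "d \<in> D \<inter> saturation H" and "(n::nat) > 0"
  then obtain e where e: "e \<in> D" "nsmul n e = d"
    using D unfolding divisible_subgroup_def by blast
  obtain m where "m \<noteq> 0" "zsmul m d \<in> H"
    using d by (auto elim: saturationE)
  moreover have "zsmul (m * int n) e = zsmul m d"
    using e by (simp add: zsmul_mult zsmul_of_nat)
  ultimately have "zsmul (m * int n) e \<in> H" "m * int n \<noteq> 0"
    using \<open>n > 0\<close> by simp_all
  then have "e \<in> saturation H"
    by (rule saturationI[rotated])
  with e show "\<exists>e\<in>D \<inter> saturation H. nsmul n e = d"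
    by blast
qed

lemma divisible_torsion_free:
  fixes v :: "'a::ab_group_add" and D :: "'a set"
  assumes ce: "centrally_essential (End_ring TYPE('a))" and D: "divisible_subgroup D"
    and v: "annihilator v = {0}" and c: "c \<in> D" "annihilator c \<noteq> {0}"
  shows "c = 0"
proof -
  let ?T = "D \<inter> saturation {0}"
  have T: "divisible_subgroup ?T"
    using divisible_inter_saturation[OF D] by (simp add: subgroup_add_def)
  then obtain r where r: "retraction r ?T"
    by (rule divisible_retraction)
  have r_endo: "r \<in> endos" and "r v \<in> saturation {0}"
    using r by (auto simp: retraction_def)
  then obtain m where "m \<noteq> 0" "zsmul m (r v) = 0"
    by (auto elim: saturationE)
  define y where "y = v - r v"
  have "r y = 0"
    unfolding y_def by (simp add: endos_diff[OF r_endo] retraction_idem[OF r])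
  have "k = 0" if "k \<in> annihilator y" for k
  proof -
    from that have "zsmul k v = zsmul k (r v)"
      by (simp add: y_def zsmul_diff_right)
    then have "m * k \<in> annihilator v"
      using \<open>zsmul m (r v) = 0\<close> by (simp add: zsmul_mult zsmul_commute[of m])
    with v \<open>m \<noteq> 0\<close> show "k = 0"
      by simp
  qed
  then have "annihilator y = {0}"
    using zero_in_annihilator[of y] by blast
  moreover have "c \<in> ?T"
    using c by (simp add: saturation_zero_iff)
  ultimately show ?thesis
    using divisible_retraction_kernel_torsion_free[OF ce T r \<open>r y = 0\<close>] by blast
qed

lemma divisible_rank_one:
  fixes v :: "'a::ab_group_add"
  assumes ce: "centrally_essential (End_ring TYPE('a))" and D: "divisible_subgroup D"
    and tf: "\<And>c. c \<in> D \<Longrightarrow> annihilator c \<noteq> {0} \<Longrightarrow> c = 0"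
    and v: "v \<in> D" "v \<noteq> 0" and w: "w \<in> D"
  shows "w \<in> saturation (multiples v)"
proof (rule ccontr)
  assume w_sat: "w \<notin> saturation (multiples v)"
  let ?S = "D \<inter> saturation (multiples v)"
  have S: "divisible_subgroup ?S"
    by (rule divisible_inter_saturation[OF D subgroup_multiples])
  then obtain r where r: "retraction r ?S"
    by (rule divisible_retraction)
  have r_endo: "r \<in> endos" and rw: "r w \<in> ?S"
    using r by (auto simp: retraction_def)
  define y where "y = w - r w"
  have "r y = 0"
    unfolding y_def by (simp add: endos_diff[OF r_endo] retraction_idem[OF r])
  have "y \<in> D"
    unfolding y_def using divisible_subgroup_subgroup[OF D] w rw by (simp add: subgroup_add_diff)
  moreover have "y \<noteq> 0"
  proof
    assume "y = 0"
    then have "r w = w"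
      unfolding y_def by (metis right_minus_eq)
    with rw w_sat show False
      by simp
  qed
  ultimately have "annihilator y = {0}"
    using tf by blast
  moreover have "zsmul 1 v \<in> multiples v"
    by (rule multiplesI)
  then have "v \<in> ?S"
    using v(1) by (auto intro: saturationI[of 1])
  ultimately have "v = 0"
    using divisible_retraction_kernel_torsion_free[OF ce S r \<open>r y = 0\<close>] by blast
  with v(2) show False
    by contradiction
qed

lemma saturation_multiplesE:
  assumes "w \<in> saturation (multiples v)"
  obtains n m where "n \<noteq> 0" "zsmul n w = zsmul m v"
  using assms by (auto elim!: saturationE multiplesE)

lemma divisible_endos_commute:
  fixes v :: "'a::ab_group_add"
  assumes ce: "centrally_essential (End_ring TYPE('a))" and D: "divisible_subgroup D"
    and tf: "\<And>c. c \<in> D \<Longrightarrow> annihilator c \<noteq> {0} \<Longrightarrow> c = 0"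
    and v: "v \<in> D" and f: "f \<in> endos" and g: "g \<in> endos"
  shows "f (g v) = g (f v)"
proof (cases "v = 0")
  case False
  obtain r where r: "retraction r D"
    using divisible_retraction[OF D] .
  have fD: "f x \<in> D" and gD: "g x \<in> D" if "x \<in> D" for x
    using retraction_invariant[OF ce r f that] retraction_invariant[OF ce r g that] .
  obtain n1 m1 where n1: "n1 \<noteq> 0" "zsmul n1 (f v) = zsmul m1 v"
    using divisible_rank_one[OF ce D tf v False fD[OF v]] by (rule saturation_multiplesE)
  obtain n2 m2 where n2: "n2 \<noteq> 0" "zsmul n2 (g v) = zsmul m2 v"
    using divisible_rank_one[OF ce D tf v False gD[OF v]] by (rule saturation_multiplesE)
  have "zsmul (n1 * n2) (f (g v)) = zsmul n1 (f (zsmul n2 (g v)))"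
    using f by (simp add: zsmul_mult endos_zsmul)
  also have "\<dots> = zsmul m2 (zsmul n1 (f v))"
    using f n2(2) by (simp add: endos_zsmul zsmul_commute[of n1])
  also have "\<dots> = zsmul m1 (zsmul n2 (g v))"
    using n1(2) n2(2) by (simp add: zsmul_commute[of m2])
  also have "\<dots> = zsmul n2 (g (zsmul n1 (f v)))"
    using g n1(2) by (simp add: endos_zsmul zsmul_commute[of m1])
  also have "\<dots> = zsmul (n1 * n2) (g (f v))"
    using g by (simp add: endos_zsmul zsmul_mult zsmul_commute[of n1])
  finally have "n1 * n2 \<in> annihilator (f (g v) - g (f v))"
    by (simp add: zsmul_diff_right)
  moreover have "n1 * n2 \<noteq> 0"
    using n1(1) n2(1) by simp
  ultimately have "annihilator (f (g v) - g (f v)) \<noteq> {0}"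
    by blast
  moreover have "f (g v) - g (f v) \<in> D"
    using fD gD v divisible_subgroup_subgroup[OF D] by (simp add: subgroup_add_diff)
  ultimately have "f (g v) - g (f v) = 0"
    using tf by blast
  then show ?thesis
    by simp
qed (simp add: f g)

lemma nonreduced_endos_commute:
  fixes v :: "'a::ab_group_add" and D :: "'a set"
  assumes ce: "centrally_essential (End_ring TYPE('a))" and D: "divisible_subgroup D"
    and d0: "d0 \<in> D" "d0 \<noteq> 0" and v: "annihilator v = {0}"
    and f: "f \<in> endos" and g: "g \<in> endos"
  shows "f (g v) = g (f v)"
proof -
  have tf: "c = 0" if "c \<in> D" "annihilator c \<noteq> {0}" for c
    using divisible_torsion_free[OF ce D v that] .
  obtain r where r: "retraction r D"
    using divisible_retraction[OF D] .
  have r_endo: "r \<in> endos" and "r v \<in> D"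
    using r by (auto simp: retraction_def)
  define k where "k = v - r v"
  have "r k = 0"
    unfolding k_def by (simp add: endos_diff[OF r_endo] retraction_idem[OF r])
  have "annihilator k \<noteq> {0}"
  proof
    assume "annihilator k = {0}"
    then have "d0 = 0"
      using d0(1) by (rule divisible_retraction_kernel_torsion_free[OF ce D r \<open>r k = 0\<close>])
    with d0(2) show False
      by contradiction
  qed
  then have "f (g k) = g (f k)"
    by (rule torsion_endos_commute[OF ce _ f g])
  moreover have "f (g (r v)) = g (f (r v))"
    by (rule divisible_endos_commute[OF ce D tf \<open>r v \<in> D\<close> f g])
  ultimately have "f (g (r v + k)) = g (f (r v + k))"
    using f g by (simp add: endos_add)
  then show ?thesis
    by (simp add: k_def)
qed

lemma torsion_group_annihilator:
  fixes A :: "'a::ab_group_add itself" and x :: 'a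
  assumes "torsion_group A"
  shows "annihilator x \<noteq> {0}"
proof -
  obtain n where "n > 0" "nsmul n x = 0"
    using assms unfolding torsion_group_def by blast
  then have "int n \<in> annihilator x" "int n \<noteq> 0"
    by (simp_all add: zsmul_of_nat)
  then show ?thesis
    by blast
qed

lemma not_reduced_groupE:
  fixes A :: "'a::ab_group_add itself"
  assumes "\<not> reduced_group A"
  obtains D :: "'a set" and d where "divisible_subgroup D" "d \<in> D" "d \<noteq> 0"
proof -
  obtain D :: "'a set" where D: "divisible_subgroup D" "D \<noteq> {0}"
    using assms unfolding reduced_group_def by blast
  moreover have "0 \<in> D"
    using subgroup_add_zero[OF divisible_subgroup_subgroup[OF D(1)]] .
  ultimately show thesis
    using that by blast
qed

theorem mainTheorem1:
  fixes A :: "'a::ab_group_add itself"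
  assumes "\<exists>x::'a. x \<noteq> 0"
    and "torsion_group A \<or> \<not> reduced_group A"
    and "centrally_essential (End_ring A)"
  shows "ring_commutative (End_ring A)"
proof -
  have ce: "centrally_essential (End_ring TYPE('a))"
    using assms(3) by (simp add: End_ring_def)
  have "f (g v) = g (f v)" if f: "f \<in> endos" and g: "g \<in> endos" for f g and v :: 'a
  proof (cases "annihilator v = {0}")
    case False
    then show ?thesis
      by (rule torsion_endos_commute[OF ce _ f g])
  next
    case True
    then have "\<not> reduced_group A"
      using assms(2) torsion_group_annihilator by blast
    then obtain D :: "'a set" and d where "divisible_subgroup D" "d \<in> D" "d \<noteq> 0"
      by (rule not_reduced_groupE)
    then show ?thesis
      by (rule nonreduced_endos_commute[OF ce _ _ _ True f g])
  qed
  then show ?thesis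
    by (auto simp: ring_commutative_def fun_eq_iff)
qed

end
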